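(* Let $T_1,T_2$ be equidistant trees on leaf set $X$ with $|X|=n$, and let $X_0\subseteq X$ be a set of leaves which forms a clade in both $T_1$ and $T_2$, such that the tree topology of this clade is the same in $T_1$ and in $T_2$. Then for any tree $T$ on the tropical line segment from $T_1$ to $T_2$, $X_0$ is also a clade of $T$, with the same tree topology as in $T_1$ and $T_2$.
   Context: Max-plus arithmetic: $a\oplus b=\max\{a,b\}$, $a\odot b=a+b$; vectors in $\mathbb{R}^e$, $e=\binom n2$, with coordinates indexed by pairs of leaves, are considered modulo $\mathbb R\mathbf 1$. An equidistant tree is a rooted phylogenetic tree on leaf set $X$ with nonnegative edge lengths and all root-to-leaf distances equal; its ultrametric $u$ is the vector of pairwise leaf distances, and every ultrametric determines a unique equidistant tree. The tropical line segment between trees with ultrametrics $u,v$ consists of the trees with ultrametrics $a\odot u\oplus b\odot v$, $a,b\in\mathbb R$. A clade of a tree is the set of all leaves descending from some vertex; the clade on $X_0$ is the equidistant tree obtained by restricting the tree to the leaves $X_0$ (its ultrametric is the restriction $(u_{ij})_{i,j\in X_0}$), and its tree topology is the topology of this restricted tree. *)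

theory Defs
  imports Main "HOL.Real"
begin

text \<open>Ultrametrics on a finite leaf set X, represented by the pairwise-distance
function u :: 'a => 'a => real; only off-diagonal entries (pairs of distinct
leaves) are coordinates.\<close>

definition ultrametric :: "'a set \<Rightarrow> ('a \<Rightarrow> 'a \<Rightarrow> real) \<Rightarrow> bool" where
  "ultrametric X u \<longleftrightarrow>
     (\<forall>i\<in>X. \<forall>j\<in>X. i \<noteq> j \<longrightarrow> u i j = u j i \<and> 0 \<le> u i j) \<and>
     (\<forall>i\<in>X. \<forall>j\<in>X. \<forall>k\<in>X. i \<noteq> j \<and> i \<noteq> k \<and> j \<noteq> k \<longrightarrow>
        u i j \<le> max (u i k) (u j k))"

text \<open>A clade of the equidistant tree with ultrametric u on leaf set X: a nonempty
set A of leaves such that there is a vertex whose descendant leaves are exactly A,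
i.e. any two leaves of A are strictly closer to each other than to any leaf outside A.\<close>

definition is_clade :: "'a set \<Rightarrow> ('a \<Rightarrow> 'a \<Rightarrow> real) \<Rightarrow> 'a set \<Rightarrow> bool" where
  "is_clade X u A \<longleftrightarrow> A \<noteq> {} \<and> A \<subseteq> X \<and>
     (\<forall>i\<in>A. \<forall>j\<in>A. \<forall>k\<in>X - A. i \<noteq> j \<longrightarrow> u i j < u i k)"

text \<open>The (rooted) tree topology of the tree with ultrametric u restricted to leaf set X0,
identified with its set of clades (clusters).\<close>

definition tree_topology :: "'a set \<Rightarrow> ('a \<Rightarrow> 'a \<Rightarrow> real) \<Rightarrow> 'a set set" where
  "tree_topology X0 u = {A. is_clade X0 u A}"

text \<open>Points of the tropical line segment: a \<odot> u \<oplus> b \<odot> v.\<close>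

definition trop_comb :: "real \<Rightarrow> ('a \<Rightarrow> 'a \<Rightarrow> real) \<Rightarrow> real \<Rightarrow> ('a \<Rightarrow> 'a \<Rightarrow> real) \<Rightarrow> 'a \<Rightarrow> 'a \<Rightarrow> real" where
  "trop_comb a u b v = (\<lambda>i j. max (a + u i j) (b + v i j))"

end

theory Submission
  imports Defs
begin

text \<open>In an ultrametric, u i j < u i k holds exactly when some clade contains i and j
but not k: the closed ball around i of radius u i j is such a clade. So ultrametrics with
the same topology on X0 make the same strict comparisons u i j < u i k among leaves of X0,
and clades are defined by these comparisons alone. A maximum of shifted copies of u and v
makes the comparison whenever u and v both do, and fails it whenever both fail it, so the
tropical combination inherits the clade X0 and its topology.\<close>

lemma ultrametric_sym:
  "ultrametric X u \<Longrightarrow> i \<in> X \<Longrightarrow> j \<in> X \<Longrightarrow> i \<noteq> j \<Longrightarrow> u i j = u j i"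
  unfolding ultrametric_def by blast

lemma ultrametric_le_max:
  "ultrametric X u \<Longrightarrow> i \<in> X \<Longrightarrow> j \<in> X \<Longrightarrow> k \<in> X \<Longrightarrow> i \<noteq> j \<Longrightarrow> i \<noteq> k \<Longrightarrow> j \<noteq> k
    \<Longrightarrow> u i j \<le> max (u i k) (u j k)"
  unfolding ultrametric_def by blast

lemma ultrametric_subset: "ultrametric X u \<Longrightarrow> Y \<subseteq> X \<Longrightarrow> ultrametric Y u"
  unfolding ultrametric_def by blast

lemma is_clade_closed_ball:
  assumes u: "ultrametric X u" and i: "i \<in> X"
  shows "is_clade X u {x \<in> X. x = i \<or> u i x \<le> r}" (is "is_clade X u ?C")
  unfolding is_clade_def
proof (intro conjI ballI impI)
  show "?C \<noteq> {}" "?C \<subseteq> X" using i by auto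
next
  fix p q s assume p: "p \<in> ?C" and q: "q \<in> ?C" and s: "s \<in> X - ?C" and pq: "p \<noteq> q"
  have X: "p \<in> X" "q \<in> X" "s \<in> X" and si: "s \<noteq> i" and r_less: "r < u i s"
    using p q s by auto
  have near: "u x i \<le> r" if "x \<in> ?C" "x \<noteq> i" for x
    using that ultrametric_sym[OF u i, of x] by auto
  have "u p q \<le> r"
  proof (cases "p = i \<or> q = i")
    case True
    then show ?thesis
      using p q pq near ultrametric_sym[OF u X(1,2) pq] by auto
  next
    case False
    then have "u p q \<le> max (u p i) (u q i)"
      using ultrametric_le_max[OF u X(1,2) i pq] by blast
    moreover have "u p i \<le> r" "u q i \<le> r"
      using False near p q by blast+
    ultimately show ?thesis by simp
  qed
  moreover have "r < u p s"
  proof (cases "p = i")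
    case True
    then show ?thesis using r_less by simp
  next
    case False
    have "u i s \<le> max (u i p) (u p s)"
      using ultrametric_le_max[OF u i X(3,1)] ultrametric_sym[OF u X(3,1)] False si p s
      by auto
    then show ?thesis using r_less p False by auto
  qed
  ultimately show "u p q < u p s" by simp
qed

lemma ultrametric_less_iff_separating_clade:
  assumes u: "ultrametric X u" and ijk: "i \<in> X" "j \<in> X" "k \<in> X" "i \<noteq> j" "i \<noteq> k"
  shows "u i j < u i k \<longleftrightarrow> (\<exists>C \<in> tree_topology X u. i \<in> C \<and> j \<in> C \<and> k \<notin> C)"
proof
  assume "u i j < u i k"
  then have "i \<in> C \<and> j \<in> C \<and> k \<notin> C" if "C = {x \<in> X. x = i \<or> u i x \<le> u i j}" for C
    using that ijk by auto
  then show "\<exists>C \<in> tree_topology X u. i \<in> C \<and> j \<in> C \<and> k \<notin> C"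
    using is_clade_closed_ball[OF u ijk(1)] unfolding tree_topology_def by blast
next
  assume "\<exists>C \<in> tree_topology X u. i \<in> C \<and> j \<in> C \<and> k \<notin> C"
  then obtain C where "is_clade X u C" "i \<in> C" "j \<in> C" "k \<notin> C"
    unfolding tree_topology_def by blast
  then show "u i j < u i k"
    using ijk unfolding is_clade_def by blast
qed

definition same_triplet_order :: "'a set \<Rightarrow> ('a \<Rightarrow> 'a \<Rightarrow> real) \<Rightarrow> ('a \<Rightarrow> 'a \<Rightarrow> real) \<Rightarrow> bool" where
  "same_triplet_order X u v \<longleftrightarrow>
     (\<forall>i\<in>X. \<forall>j\<in>X. \<forall>k\<in>X. i \<noteq> j \<and> i \<noteq> k \<and> j \<noteq> k \<longrightarrow>
        (u i j < u i k \<longleftrightarrow> v i j < v i k))"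

lemma same_triplet_orderD:
  "same_triplet_order X u v \<Longrightarrow> i \<in> X \<Longrightarrow> j \<in> X \<Longrightarrow> k \<in> X \<Longrightarrow> i \<noteq> j \<Longrightarrow> i \<noteq> k \<Longrightarrow> j \<noteq> k
    \<Longrightarrow> u i j < u i k \<longleftrightarrow> v i j < v i k"
  unfolding same_triplet_order_def by blast

lemma same_triplet_order_if_tree_topology_eq:
  assumes "ultrametric X u" "ultrametric X v" "tree_topology X u = tree_topology X v"
  shows "same_triplet_order X u v"
  unfolding same_triplet_order_def
proof (intro ballI impI)
  fix i j k assume "i \<in> X" "j \<in> X" "k \<in> X" and "i \<noteq> j \<and> i \<noteq> k \<and> j \<noteq> k"
  then show "u i j < u i k \<longleftrightarrow> v i j < v i k"
    using ultrametric_less_iff_separating_clade[OF assms(1)]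
      ultrametric_less_iff_separating_clade[OF assms(2)] assms(3) by auto
qed

lemma is_clade_iff_if_same_triplet_order:
  assumes "same_triplet_order X u v"
  shows "is_clade X u A \<longleftrightarrow> is_clade X v A"
proof -
  have "u i j < u i k \<longleftrightarrow> v i j < v i k"
    if "A \<subseteq> X" "i \<in> A" "j \<in> A" "k \<in> X - A" "i \<noteq> j" for i j k
    using same_triplet_orderD[OF assms, of i j k] that by blast
  then show ?thesis
    unfolding is_clade_def by (metis (no_types, lifting))
qed

lemma tree_topology_eq_if_same_triplet_order:
  "same_triplet_order X u v \<Longrightarrow> tree_topology X u = tree_topology X v"
  unfolding tree_topology_def using is_clade_iff_if_same_triplet_order by blast

lemma same_triplet_order_trop_comb:
  assumes "same_triplet_order X u v"
  shows "same_triplet_order X u (trop_comb a u b v)"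
  unfolding same_triplet_order_def trop_comb_def
proof (intro ballI impI)
  fix i j k assume "i \<in> X" "j \<in> X" "k \<in> X" and "i \<noteq> j \<and> i \<noteq> k \<and> j \<noteq> k"
  then have "u i j < u i k \<longleftrightarrow> v i j < v i k"
    using same_triplet_orderD[OF assms] by blast
  then show "u i j < u i k \<longleftrightarrow> max (a + u i j) (b + v i j) < max (a + u i k) (b + v i k)"
    by (auto simp: max_def)
qed

lemma is_clade_trop_comb:
  assumes "is_clade X u A" "is_clade X v A"
  shows "is_clade X (trop_comb a u b v) A"
  unfolding is_clade_def trop_comb_def
proof (intro conjI ballI impI)
  show "A \<noteq> {}" "A \<subseteq> X" using assms(1) unfolding is_clade_def by auto
next
  fix i j k assume "i \<in> A" "j \<in> A" "k \<in> X - A" "i \<noteq> j"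
  then have "u i j < u i k" "v i j < v i k"
    using assms unfolding is_clade_def by blast+
  then show "max (a + u i j) (b + v i j) < max (a + u i k) (b + v i k)"
    by (auto simp: max_def)
qed

theorem theorem5:
  fixes X X0 :: "'a set" and u v :: "'a \<Rightarrow> 'a \<Rightarrow> real" and a b :: real
  assumes "finite X"
    and "ultrametric X u" and "ultrametric X v"
    and "is_clade X u X0" and "is_clade X v X0"
    and "tree_topology X0 u = tree_topology X0 v"
  shows "is_clade X (trop_comb a u b v) X0 \<and>
         tree_topology X0 (trop_comb a u b v) = tree_topology X0 u"
proof
  show "is_clade X (trop_comb a u b v) X0"
    using is_clade_trop_comb assms(4,5) .
next
  have "X0 \<subseteq> X" using assms(4) unfolding is_clade_def by blast
  then have "same_triplet_order X0 u v"
    using same_triplet_order_if_tree_topology_eq ultrametric_subset assms(2,3,6) by blast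
  then have "same_triplet_order X0 u (trop_comb a u b v)"
    by (rule same_triplet_order_trop_comb)
  then show "tree_topology X0 (trop_comb a u b v) = tree_topology X0 u"
    by (rule tree_topology_eq_if_same_triplet_order[symmetric])
qed

end
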